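(* Every quasi-semi-simple group $(G,\tau)$ is topologically minimal: if $\tau'$ is a Hausdorff topology on $G$ making $G$ a topological group and $\tau'\subseteq\tau$, then $\tau'=\tau$.
   Context: A locally compact group $G$ is quasi-semi-simple (qss) if there is a closed subgroup $A<G$ such that (i) $G=CAC$ for some compact $C\subset G$; (ii) for every net $(a_\alpha)$ in $A$ converging to infinity there is a subnet $(a_\beta)$ such that $U^{(a_\beta)}_+$ is not precompact and the subgroup generated by $U^{(a_\beta)}_+,U^{(a_\beta)}_-,U^{(a_\beta)}_0$ is dense in $G$, where for a net $(g_\alpha)$: $U^{(g_\alpha)}_+=\{x: g_\alpha^{-1}xg_\alpha\to e\}$, $U^{(g_\alpha)}_-=\{x: g_\alpha xg_\alpha^{-1}\to e\}$, and $U^{(g_\alpha)}_0$ is the set of $x$ such that every subnet of each of the nets $(g_\alpha^{-1}xg_\alpha)$, $(g_\alpha xg_\alpha^{-1})$ admits a converging subnet. *)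

theory Defs
  imports "HOL-Analysis.Analysis" "HOL-Algebra.Generated_Groups"
begin

definition topological_group :: "('a, 'b) monoid_scheme \<Rightarrow> 'a topology \<Rightarrow> bool" where
  "topological_group G T \<longleftrightarrow> group G \<and> topspace T = carrier G \<and>
     continuous_map (prod_topology T T) T (\<lambda>p. fst p \<otimes>\<^bsub>G\<^esub> snd p) \<and>
     continuous_map T T (\<lambda>x. inv\<^bsub>G\<^esub> x)"

definition locally_compact_group :: "('a, 'b) monoid_scheme \<Rightarrow> 'a topology \<Rightarrow> bool" where
  "locally_compact_group G T \<longleftrightarrow> topological_group G T \<and> Hausdorff_space T \<and>
     locally_compact_space T"

text \<open>Nets are encoded by their tail filters: a net in a set S is a proper filter F
with S eventually; a subnet of F is a proper filter F' finer than F.\<close>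
definition net_in :: "'a set \<Rightarrow> 'a filter \<Rightarrow> bool" where
  "net_in S F \<longleftrightarrow> F \<noteq> bot \<and> eventually (\<lambda>x. x \<in> S) F"

definition subnet :: "'a filter \<Rightarrow> 'a filter \<Rightarrow> bool" where
  "subnet F' F \<longleftrightarrow> F' \<noteq> bot \<and> F' \<le> F"

definition tends_to_infinity :: "'a topology \<Rightarrow> 'a filter \<Rightarrow> bool" where
  "tends_to_infinity T F \<longleftrightarrow> (\<forall>K. compactin T K \<longrightarrow> eventually (\<lambda>x. x \<notin> K) F)"

definition precompact :: "'a topology \<Rightarrow> 'a set \<Rightarrow> bool" where
  "precompact T S \<longleftrightarrow> compactin T (T closure_of S)"

definition subnets_have_conv_subnets :: "'a topology \<Rightarrow> 'a filter \<Rightarrow> bool" where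
  "subnets_have_conv_subnets T F \<longleftrightarrow>
     (\<forall>H. subnet H F \<longrightarrow> (\<exists>H' l. subnet H' H \<and> limitin T (\<lambda>y. y) l H'))"

definition U_plus :: "('a, 'b) monoid_scheme \<Rightarrow> 'a topology \<Rightarrow> 'a filter \<Rightarrow> 'a set" where
  "U_plus G T F = {x \<in> carrier G.
      limitin T (\<lambda>g. inv\<^bsub>G\<^esub> g \<otimes>\<^bsub>G\<^esub> x \<otimes>\<^bsub>G\<^esub> g) \<one>\<^bsub>G\<^esub> F}"

definition U_minus :: "('a, 'b) monoid_scheme \<Rightarrow> 'a topology \<Rightarrow> 'a filter \<Rightarrow> 'a set" where
  "U_minus G T F = {x \<in> carrier G.
      limitin T (\<lambda>g. g \<otimes>\<^bsub>G\<^esub> x \<otimes>\<^bsub>G\<^esub> inv\<^bsub>G\<^esub> g) \<one>\<^bsub>G\<^esub> F}"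

definition U_zero :: "('a, 'b) monoid_scheme \<Rightarrow> 'a topology \<Rightarrow> 'a filter \<Rightarrow> 'a set" where
  "U_zero G T F = {x \<in> carrier G.
      subnets_have_conv_subnets T (filtermap (\<lambda>g. inv\<^bsub>G\<^esub> g \<otimes>\<^bsub>G\<^esub> x \<otimes>\<^bsub>G\<^esub> g) F) \<and>
      subnets_have_conv_subnets T (filtermap (\<lambda>g. g \<otimes>\<^bsub>G\<^esub> x \<otimes>\<^bsub>G\<^esub> inv\<^bsub>G\<^esub> g) F)}"

definition quasi_semi_simple :: "('a, 'b) monoid_scheme \<Rightarrow> 'a topology \<Rightarrow> bool" where
  "quasi_semi_simple G T \<longleftrightarrow> locally_compact_group G T \<and>
     (\<exists>A. subgroup A G \<and> closedin T A \<and>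
        (\<exists>C. compactin T C \<and>
           carrier G = {c \<otimes>\<^bsub>G\<^esub> a \<otimes>\<^bsub>G\<^esub> c' | c a c'. c \<in> C \<and> a \<in> A \<and> c' \<in> C}) \<and>
        (\<forall>F. net_in A F \<and> tends_to_infinity T F \<longrightarrow>
           (\<exists>F'. subnet F' F \<and> \<not> precompact T (U_plus G T F') \<and>
              T closure_of (generate G (U_plus G T F' \<union> U_minus G T F' \<union> U_zero G T F'))
                = carrier G)))"

end

theory Submission
  imports Defs
begin

(* Let tau' be a Hausdorff group topology coarser than the qss topology tau. If some tau-open set
   U were not tau'-open at x in U, a net converging to x in tau' while staying outside U would
   escape every tau-compact set (a tau-cluster point would be a second tau'-limit). Writing the
   elements of this net as c a d with c, d in the compact set C of the decomposition G = C A C,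
   a subnet makes c and d converge, so the A-components converge in tau' and still escape to
   infinity. Quasi-semi-simplicity yields a further subnet whose contraction group U_+ is not
   precompact, but along a tau'-convergent net the contraction group is trivial. *)

lemma limitin_filtercomap_nhdsin:
  assumes "y \<in> topspace X" "F \<le> filtercomap f (nhdsin X y)"
  shows "limitin X f y F"
  unfolding limitin_def
proof (intro conjI allI impI)
  fix V assume "openin X V \<and> y \<in> V"
  then have "eventually (\<lambda>z. z \<in> V) (nhdsin X y)"
    unfolding eventually_nhdsin by blast
  then have "eventually (\<lambda>x. f x \<in> V) (filtercomap f (nhdsin X y))"
    by (rule eventually_filtercomapI)
  then show "eventually (\<lambda>x. f x \<in> V) F"
    using assms(2) by (rule filter_leD[rotated])
qed (fact assms(1))

lemma limitin_mono_filter: "F' \<le> F \<Longrightarrow> limitin X f l F \<Longrightarrow> limitin X f l F'"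
  unfolding limitin_def using filter_leD by blast

lemma limitin_coarser:
  assumes "\<forall>U. openin T' U \<longrightarrow> openin T U" "topspace T' = topspace T" "limitin T f l F"
  shows "limitin T' f l F"
  using assms unfolding limitin_def by auto

lemma incompatible_nhdsin_avoided:
  assumes "inf F (filtercomap f (nhdsin X y)) = bot" "y \<in> topspace X"
  obtains U Q where "openin X U" "y \<in> U" "eventually Q F" "\<forall>x. Q x \<longrightarrow> f x \<notin> U"
proof -
  obtain Q R where Q: "eventually Q F" and R: "eventually R (filtercomap f (nhdsin X y))"
    and QR: "\<And>x. Q x \<Longrightarrow> R x \<Longrightarrow> False"
    using assms(1) unfolding trivial_limit_def eventually_inf by blast
  from R obtain P where "eventually P (nhdsin X y)" and PR: "\<And>x. P (f x) \<Longrightarrow> R x"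
    unfolding eventually_filtercomap by blast
  with assms(2) obtain U where "openin X U" "y \<in> U" "\<forall>z\<in>U. P z"
    unfolding eventually_nhdsin by blast
  with Q QR PR show thesis by (intro that[of U Q]) auto
qed

(* Otherwise finitely many eventually
   avoided neighbourhoods would cover K. *)
lemma compactin_cluster_point:
  assumes K: "compactin X K" and F: "F \<noteq> bot" and ev: "eventually (\<lambda>x. f x \<in> K) F"
  shows "\<exists>y\<in>K. inf F (filtercomap f (nhdsin X y)) \<noteq> bot"
proof (rule ccontr)
  assume no_cluster: "\<not> ?thesis"
  have "\<forall>y\<in>K. \<exists>UQ. openin X (fst UQ) \<and> y \<in> fst UQ \<and> eventually (snd UQ) F \<and>
                            (\<forall>x. snd UQ x \<longrightarrow> f x \<notin> fst UQ)"
  proof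
    fix y assume y: "y \<in> K"
    then have "inf F (filtercomap f (nhdsin X y)) = bot" using no_cluster by blast
    moreover have "y \<in> topspace X" using compactin_subset_topspace[OF K] y by blast
    ultimately obtain U Q where "openin X U" "y \<in> U" "eventually Q F" "\<forall>x. Q x \<longrightarrow> f x \<notin> U"
      by (rule incompatible_nhdsin_avoided)
    then show "\<exists>UQ. openin X (fst UQ) \<and> y \<in> fst UQ \<and> eventually (snd UQ) F \<and>
                    (\<forall>x. snd UQ x \<longrightarrow> f x \<notin> fst UQ)"
      by (intro exI[of _ "(U, Q)"]) simp
  qed
  then obtain UQ where UQ: "\<And>y. y \<in> K \<Longrightarrow> openin X (fst (UQ y)) \<and> y \<in> fst (UQ y) \<and>
       eventually (snd (UQ y)) F \<and> (\<forall>x. snd (UQ y) x \<longrightarrow> f x \<notin> fst (UQ y))"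
    by metis
  have "K \<subseteq> \<Union> ((\<lambda>y. fst (UQ y)) ` K)" using UQ by blast
  then obtain \<F> where \<F>: "finite \<F>" "\<F> \<subseteq> (\<lambda>y. fst (UQ y)) ` K" "K \<subseteq> \<Union>\<F>"
    using K UQ unfolding compactin_def by (metis (no_types, lifting) imageE)
  then obtain K0 where K0: "K0 \<subseteq> K" "finite K0" "\<F> = (\<lambda>y. fst (UQ y)) ` K0"
    by (meson finite_subset_image)
  have "eventually (\<lambda>x. \<forall>y\<in>K0. snd (UQ y) x) F"
    using K0 UQ by (intro eventually_ball_finite) auto
  then have "eventually (\<lambda>x. False) F"
    using ev
  proof (rule eventually_elim2)
    fix x assume avoided: "\<forall>y\<in>K0. snd (UQ y) x" and "f x \<in> K"
    then obtain y where "y \<in> K0" "f x \<in> fst (UQ y)" using \<F> K0 by blast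
    then show False using avoided UQ K0 by blast
  qed
  then show False using F by simp
qed

lemma compactin_convergent_subfilter:
  assumes "compactin X K" "F \<noteq> bot" "eventually (\<lambda>x. f x \<in> K) F"
  obtains y H where "y \<in> K" "H \<noteq> bot" "H \<le> F" "limitin X f y H"
proof -
  obtain y where y: "y \<in> K" and H: "inf F (filtercomap f (nhdsin X y)) \<noteq> bot"
    using compactin_cluster_point[OF assms] by blast
  have "y \<in> topspace X" using compactin_subset_topspace[OF assms(1)] y by blast
  then have "limitin X f y (inf F (filtercomap f (nhdsin X y)))"
    by (rule limitin_filtercomap_nhdsin) (rule inf_le2)
  then show thesis by (rule that[OF y H inf_le1])
qed

lemma not_interior_point_net:
  assumes "x \<in> topspace T" "\<not> (\<exists>V. openin T V \<and> x \<in> V \<and> V \<subseteq> U)"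
  obtains F where "F \<noteq> bot" "limitin T (\<lambda>y. y) x F" "eventually (\<lambda>y. y \<in> topspace T - U) F"
proof
  let ?F = "inf (nhdsin T x) (principal (topspace T - U))"
  show "?F \<noteq> bot"
  proof
    assume "?F = bot"
    then have "eventually (\<lambda>y. y \<in> topspace T - U \<longrightarrow> False) (nhdsin T x)"
      unfolding trivial_limit_def eventually_inf_principal .
    then obtain V where "openin T V" "x \<in> V" "\<forall>y\<in>V. y \<in> topspace T - U \<longrightarrow> False"
      using assms(1) unfolding eventually_nhdsin by blast
    moreover have "V \<subseteq> topspace T" using \<open>openin T V\<close> by (rule openin_subset)
    ultimately show False using assms(2) by blast
  qed
  show "limitin T (\<lambda>y. y) x ?F"
    using assms(1) by (rule limitin_filtercomap_nhdsin) (simp add: filtercomap_ident)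
  show "eventually (\<lambda>y. y \<in> topspace T - U) ?F"
    by (simp add: eventually_inf_principal)
qed

(* A net converging to x in a coarser Hausdorff topology T' but avoiding a T-neighbourhood of x
   leaves every T-compact set: a T-cluster point in a compact set would be a second T'-limit. *)
lemma limit_avoiding_nbhd_tends_to_infinity:
  assumes coarser: "\<forall>U. openin T' U \<longrightarrow> openin T U" "topspace T' = topspace T"
    and Haus: "Hausdorff_space T'"
    and U: "openin T U" "x \<in> U"
    and lim: "limitin T' (\<lambda>y. y) x F" and avoid: "eventually (\<lambda>y. y \<notin> U) F"
  shows "tends_to_infinity T F"
  unfolding tends_to_infinity_def
proof (intro allI impI)
  fix K assume K: "compactin T K"
  show "eventually (\<lambda>y. y \<notin> K) F"
  proof (rule ccontr)
    assume "\<not> eventually (\<lambda>y. y \<notin> K) F"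
    then have "inf F (principal K) \<noteq> bot"
      unfolding trivial_limit_def eventually_inf_principal by simp
    moreover have "eventually (\<lambda>y. y \<in> K) (inf F (principal K))"
      by (simp add: eventually_inf_principal)
    ultimately obtain y H where H: "H \<noteq> bot" "H \<le> inf F (principal K)"
      and limT: "limitin T (\<lambda>y. y) y H"
      by (rule compactin_convergent_subfilter[OF K])
    have HF: "H \<le> F" using H(2) by (rule le_infE)
    have "limitin T' (\<lambda>y. y) y H" using coarser limT by (rule limitin_coarser)
    moreover have "limitin T' (\<lambda>y. y) x H" using HF lim by (rule limitin_mono_filter)
    ultimately have "y = x" using H(1) Haus by (rule limitin_Hausdorff_unique)
    with limT U have "eventually (\<lambda>z. z \<in> U) H" unfolding limitin_def by blast
    moreover have "eventually (\<lambda>z. z \<notin> U) H" using HF avoid by (rule filter_leD)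
    ultimately have "eventually (\<lambda>z. False) H" by (rule eventually_elim2) simp
    with H(1) show False by simp
  qed
qed

lemma coarser_topology_eq_if_no_escaping_nets:
  assumes coarser: "\<forall>U. openin T' U \<longrightarrow> openin T U" "topspace T' = topspace T"
    and Haus: "Hausdorff_space T'"
    and no_escape: "\<And>F x. F \<noteq> bot \<Longrightarrow> eventually (\<lambda>y. y \<in> topspace T) F \<Longrightarrow>
                       limitin T' (\<lambda>y. y) x F \<Longrightarrow> \<not> tends_to_infinity T F"
  shows "T' = T"
  unfolding topology_eq
proof (intro allI iffI)
  fix U assume "openin T' U" then show "openin T U" using coarser(1) by blast
next
  fix U assume U: "openin T U"
  show "openin T' U"
    unfolding openin_subopen[of T' U]
  proof (rule ballI, rule ccontr)
    fix x assume x: "x \<in> U" and not_interior: "\<not> (\<exists>V. openin T' V \<and> x \<in> V \<and> V \<subseteq> U)"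
    have "x \<in> topspace T'" using openin_subset[OF U] x coarser(2) by blast
    then obtain F where F: "F \<noteq> bot" "limitin T' (\<lambda>y. y) x F"
      and outside: "eventually (\<lambda>y. y \<in> topspace T' - U) F"
      using not_interior by (rule not_interior_point_net)
    have "eventually (\<lambda>y. y \<notin> U) F" "eventually (\<lambda>y. y \<in> topspace T) F"
      using outside coarser(2) by (auto elim: eventually_mono)
    then show False
      using limit_avoiding_nbhd_tends_to_infinity[OF coarser Haus U x F(2)] no_escape F by blast
  qed
qed

lemma (in group) inv_outer_factors:
  assumes "c \<in> carrier G" "a \<in> carrier G" "d \<in> carrier G"
  shows "inv c \<otimes> (c \<otimes> a \<otimes> d) \<otimes> inv d = a"
  using assms by (simp add: m_assoc[symmetric]) (simp add: m_assoc)

lemma limitin_mult: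
  assumes "topological_group G T" "limitin T f a F" "limitin T g b F"
  shows "limitin T (\<lambda>x. f x \<otimes>\<^bsub>G\<^esub> g x) (a \<otimes>\<^bsub>G\<^esub> b) F"
proof -
  have "limitin (prod_topology T T) (\<lambda>x. (f x, g x)) (a, b) F"
    using assms(2,3) by (simp add: limitin_pairwise o_def)
  from continuous_map_limit[OF _ this, of T "\<lambda>p. fst p \<otimes>\<^bsub>G\<^esub> snd p"] assms(1)
  show ?thesis unfolding topological_group_def by (simp add: o_def)
qed

lemma limitin_inv:
  assumes "topological_group G T" "limitin T f a F"
  shows "limitin T (\<lambda>x. inv\<^bsub>G\<^esub> f x) (inv\<^bsub>G\<^esub> a) F"
  using assms continuous_map_limit[of T T "\<lambda>x. inv\<^bsub>G\<^esub> x"]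
  unfolding topological_group_def by (simp add: o_def)

lemma compactin_set_mult:
  assumes "topological_group G T" "compactin T K" "compactin T L"
  shows "compactin T (K <#>\<^bsub>G\<^esub> L)"
proof -
  have "K <#>\<^bsub>G\<^esub> L = (\<lambda>p. fst p \<otimes>\<^bsub>G\<^esub> snd p) ` (K \<times> L)"
    unfolding set_mult_def by force
  moreover have "compactin (prod_topology T T) (K \<times> L)"
    using assms(2,3) by (simp add: compactin_Times)
  ultimately show ?thesis
    using assms(1) unfolding topological_group_def by (metis image_compactin)
qed

lemma middle_factor_limit:
  assumes tg: "topological_group G T"
    and lim: "limitin T c c0 F" "limitin T d d0 F" "limitin T (\<lambda>g. g) x F"
    and decomp: "eventually (\<lambda>g. c g \<in> carrier G \<and> a g \<in> carrier G \<and> d g \<in> carrier G \<and>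
                                 g = c g \<otimes>\<^bsub>G\<^esub> a g \<otimes>\<^bsub>G\<^esub> d g) F"
  shows "limitin T a (inv\<^bsub>G\<^esub> c0 \<otimes>\<^bsub>G\<^esub> x \<otimes>\<^bsub>G\<^esub> inv\<^bsub>G\<^esub> d0) F"
proof (rule limitin_transform_eventually)
  show "limitin T (\<lambda>g. inv\<^bsub>G\<^esub> c g \<otimes>\<^bsub>G\<^esub> g \<otimes>\<^bsub>G\<^esub> inv\<^bsub>G\<^esub> d g)
          (inv\<^bsub>G\<^esub> c0 \<otimes>\<^bsub>G\<^esub> x \<otimes>\<^bsub>G\<^esub> inv\<^bsub>G\<^esub> d0) F"
    by (intro limitin_mult[OF tg] limitin_inv[OF tg] lim)
  interpret group G using tg unfolding topological_group_def by blast
  show "eventually (\<lambda>g. inv\<^bsub>G\<^esub> c g \<otimes>\<^bsub>G\<^esub> g \<otimes>\<^bsub>G\<^esub> inv\<^bsub>G\<^esub> d g = a g) F"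
    using decomp by eventually_elim (metis inv_outer_factors)
qed

(* If g = c a d with c, d in a fixed compact set C and g escapes to infinity, so does a:
   a in K would force g into the compact set C K C. *)
lemma tends_to_infinity_middle_factor:
  assumes "topological_group G T" "compactin T C" "tends_to_infinity T F"
    and decomp: "eventually (\<lambda>g. c g \<in> C \<and> d g \<in> C \<and> g = c g \<otimes>\<^bsub>G\<^esub> a g \<otimes>\<^bsub>G\<^esub> d g) F"
  shows "tends_to_infinity T (filtermap a F)"
  unfolding tends_to_infinity_def eventually_filtermap
proof (intro allI impI)
  fix K assume "compactin T K"
  then have "compactin T ((C <#>\<^bsub>G\<^esub> K) <#>\<^bsub>G\<^esub> C)"
    using assms(1,2) by (intro compactin_set_mult)
  then have "eventually (\<lambda>g. g \<notin> (C <#>\<^bsub>G\<^esub> K) <#>\<^bsub>G\<^esub> C) F"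
    using assms(3) unfolding tends_to_infinity_def by blast
  with decomp show "eventually (\<lambda>g. a g \<notin> K) F"
  proof (rule eventually_elim2, intro notI)
    fix g assume "c g \<in> C \<and> d g \<in> C \<and> g = c g \<otimes>\<^bsub>G\<^esub> a g \<otimes>\<^bsub>G\<^esub> d g" "a g \<in> K"
    then have "g \<in> (C <#>\<^bsub>G\<^esub> K) <#>\<^bsub>G\<^esub> C" unfolding set_mult_def by blast
    moreover assume "g \<notin> (C <#>\<^bsub>G\<^esub> K) <#>\<^bsub>G\<^esub> C"
    ultimately show False by contradiction
  qed
qed

lemma U_plus_coarser:
  assumes "\<forall>U. openin T' U \<longrightarrow> openin T U" "topspace T' = topspace T"
  shows "U_plus G T F \<subseteq> U_plus G T' F"
  unfolding U_plus_def using limitin_coarser[OF assms] by blast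

(* The contraction group of a convergent net in a Hausdorff topological group is trivial:
   for y in it, g^-1 y g tends both to 1 and to h^-1 y h, where h is the limit of the net. *)
lemma U_plus_of_convergent_net:
  assumes tg: "topological_group G T" and Haus: "Hausdorff_space T"
    and F: "F \<noteq> bot" and lim: "limitin T (\<lambda>g. g) h F"
  shows "U_plus G T F \<subseteq> {\<one>\<^bsub>G\<^esub>}"
proof
  interpret group G using tg unfolding topological_group_def by blast
  have h: "h \<in> carrier G" using limitin_topspace[OF lim] tg unfolding topological_group_def by simp
  fix y assume "y \<in> U_plus G T F"
  then have y: "y \<in> carrier G"
    and contract: "limitin T (\<lambda>g. inv\<^bsub>G\<^esub> g \<otimes>\<^bsub>G\<^esub> y \<otimes>\<^bsub>G\<^esub> g) \<one>\<^bsub>G\<^esub> F"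
    unfolding U_plus_def by auto
  have "limitin T (\<lambda>g. y) y F" using y tg unfolding topological_group_def by simp
  then have "limitin T (\<lambda>g. inv\<^bsub>G\<^esub> g \<otimes>\<^bsub>G\<^esub> y \<otimes>\<^bsub>G\<^esub> g) (inv\<^bsub>G\<^esub> h \<otimes>\<^bsub>G\<^esub> y \<otimes>\<^bsub>G\<^esub> h) F"
    by (intro limitin_mult[OF tg] limitin_inv[OF tg] lim)
  with contract have trivial: "inv\<^bsub>G\<^esub> h \<otimes>\<^bsub>G\<^esub> y \<otimes>\<^bsub>G\<^esub> h = \<one>\<^bsub>G\<^esub>"
    using F Haus by (metis limitin_Hausdorff_unique)
  have "y = inv\<^bsub>G\<^esub> (inv\<^bsub>G\<^esub> h) \<otimes>\<^bsub>G\<^esub> (inv\<^bsub>G\<^esub> h \<otimes>\<^bsub>G\<^esub> y \<otimes>\<^bsub>G\<^esub> h) \<otimes>\<^bsub>G\<^esub> inv\<^bsub>G\<^esub> h"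
    by (rule inv_outer_factors[symmetric]) (use h y in auto)
  also have "\<dots> = \<one>\<^bsub>G\<^esub>" using trivial h by simp
  finally show "y \<in> {\<one>\<^bsub>G\<^esub>}" by simp
qed

lemma precompact_subset_singleton:
  assumes "Hausdorff_space T" "a \<in> topspace T" "S \<subseteq> {a}"
  shows "precompact T S"
proof -
  have "T closure_of S \<subseteq> T closure_of {a}" using assms(3) by (rule closure_of_mono)
  also have "\<dots> = {a}"
    using assms(1,2) by (simp add: closure_of_singleton Hausdorff_imp_t1_space)
  finally show ?thesis
    unfolding precompact_def using assms(2) by (intro finite_imp_compactin) (auto dest: finite_subset)
qed

lemma quasi_semi_simpleD:
  assumes "quasi_semi_simple G T"
  obtains A C where "topological_group G T" "Hausdorff_space T" "subgroup A G" "compactin T C"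
    "carrier G = {c \<otimes>\<^bsub>G\<^esub> a \<otimes>\<^bsub>G\<^esub> c' | c a c'. c \<in> C \<and> a \<in> A \<and> c' \<in> C}"
    "\<And>F. net_in A F \<Longrightarrow> tends_to_infinity T F \<Longrightarrow>
          \<exists>F'. subnet F' F \<and> \<not> precompact T (U_plus G T F')"
proof -
  from assms obtain A C where lcg: "locally_compact_group G T" and A: "subgroup A G"
    and C: "compactin T C"
    and dec: "carrier G = {c \<otimes>\<^bsub>G\<^esub> a \<otimes>\<^bsub>G\<^esub> c' | c a c'. c \<in> C \<and> a \<in> A \<and> c' \<in> C}"
    and qss: "\<forall>F. net_in A F \<and> tends_to_infinity T F \<longrightarrow>
           (\<exists>F'. subnet F' F \<and> \<not> precompact T (U_plus G T F') \<and>
              T closure_of (generate G (U_plus G T F' \<union> U_minus G T F' \<union> U_zero G T F'))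
                = carrier G)"
    unfolding quasi_semi_simple_def by (elim conjE exE)
  show thesis
  proof (rule that[OF _ _ A C dec])
    show "topological_group G T" "Hausdorff_space T"
      using lcg unfolding locally_compact_group_def by simp_all
    fix F assume "net_in A F" "tends_to_infinity T F"
    with qss show "\<exists>F'. subnet F' F \<and> \<not> precompact T (U_plus G T F')" by blast
  qed
qed

lemma decomposition_functions:
  assumes "carrier G = {c \<otimes>\<^bsub>G\<^esub> a \<otimes>\<^bsub>G\<^esub> c' | c a c'. c \<in> C \<and> a \<in> A \<and> c' \<in> C}"
  obtains cf af df where "\<And>g. g \<in> carrier G \<Longrightarrow>
    cf g \<in> C \<and> af g \<in> A \<and> df g \<in> C \<and> g = cf g \<otimes>\<^bsub>G\<^esub> af g \<otimes>\<^bsub>G\<^esub> df g"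
proof -
  have "\<forall>g\<in>carrier G. \<exists>t. fst t \<in> C \<and> fst (snd t) \<in> A \<and> snd (snd t) \<in> C \<and>
                           g = fst t \<otimes>\<^bsub>G\<^esub> fst (snd t) \<otimes>\<^bsub>G\<^esub> snd (snd t)"
  proof
    fix g assume "g \<in> carrier G"
    then obtain c a c' where "c \<in> C" "a \<in> A" "c' \<in> C" "g = c \<otimes>\<^bsub>G\<^esub> a \<otimes>\<^bsub>G\<^esub> c'"
      using assms by blast
    then show "\<exists>t. fst t \<in> C \<and> fst (snd t) \<in> A \<and> snd (snd t) \<in> C \<and>
                   g = fst t \<otimes>\<^bsub>G\<^esub> fst (snd t) \<otimes>\<^bsub>G\<^esub> snd (snd t)"
      by (intro exI[of _ "(c, a, c')"]) simp
  qed
  then have "\<exists>\<phi>. \<forall>g\<in>carrier G. fst (\<phi> g) \<in> C \<and> fst (snd (\<phi> g)) \<in> A \<and> snd (snd (\<phi> g)) \<in> C \<and>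
                   g = fst (\<phi> g) \<otimes>\<^bsub>G\<^esub> fst (snd (\<phi> g)) \<otimes>\<^bsub>G\<^esub> snd (snd (\<phi> g))"
    by (rule bchoice)
  then obtain \<phi> where "\<forall>g\<in>carrier G. fst (\<phi> g) \<in> C \<and> fst (snd (\<phi> g)) \<in> A \<and> snd (snd (\<phi> g)) \<in> C \<and>
                   g = fst (\<phi> g) \<otimes>\<^bsub>G\<^esub> fst (snd (\<phi> g)) \<otimes>\<^bsub>G\<^esub> snd (snd (\<phi> g))" ..
  then show thesis by (intro that[of "\<lambda>g. fst (\<phi> g)" "\<lambda>g. fst (snd (\<phi> g))" "\<lambda>g. snd (snd (\<phi> g))"]) blast
qed

(* Given a decomposition g = c g * a g * d g with c, d in a compact set C and a in A, the
   A-components of a net that converges in a coarser group topology T' and escapes to infinity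
   in T contain a subnet with the same two properties: along a subnet the outer factors
   converge, hence so does the middle one, and escaping is inherited from the whole net. *)
lemma middle_factors_convergent_escaping_subnet:
  assumes tg: "topological_group G T" and tg': "topological_group G T'"
    and coarser: "\<forall>U. openin T' U \<longrightarrow> openin T U"
    and C: "compactin T C" and AG: "A \<subseteq> carrier G"
    and cad: "\<And>g. g \<in> carrier G \<Longrightarrow>
                  c g \<in> C \<and> a g \<in> A \<and> d g \<in> C \<and> g = c g \<otimes>\<^bsub>G\<^esub> a g \<otimes>\<^bsub>G\<^esub> d g"
    and F: "F \<noteq> bot" "eventually (\<lambda>g. g \<in> carrier G) F" and lim: "limitin T' (\<lambda>g. g) x F"
    and escapes: "tends_to_infinity T F"
  obtains H h where "net_in A (filtermap a H)" "tends_to_infinity T (filtermap a H)"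
    "limitin T' (\<lambda>b. b) h (filtermap a H)"
proof -
  have same_space: "topspace T' = topspace T" and carrier: "topspace T = carrier G"
    using tg tg' unfolding topological_group_def by simp_all
  have CG: "C \<subseteq> carrier G" using compactin_subset_topspace[OF C] carrier by simp
  have CC: "compactin (prod_topology T T) (C \<times> C)" using C by (simp add: compactin_Times)
  have "eventually (\<lambda>g. (c g, d g) \<in> C \<times> C) F"
    using F(2) by (rule eventually_mono) (simp add: cad)
  then obtain p H where H: "H \<noteq> bot" "H \<le> F"
    and outer: "limitin (prod_topology T T) (\<lambda>g. (c g, d g)) p H"
    by (rule compactin_convergent_subfilter[OF CC F(1)])
  have "eventually (\<lambda>g. g \<in> carrier G) H" using H(2) F(2) by (rule filter_leD)
  then have decH: "eventually (\<lambda>g. c g \<in> C \<and> a g \<in> A \<and> d g \<in> C \<and>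
                                   g = c g \<otimes>\<^bsub>G\<^esub> a g \<otimes>\<^bsub>G\<^esub> d g) H"
    by (rule eventually_mono) (rule cad)
  have "limitin T c (fst p) H" "limitin T d (snd p) H"
    using outer by (simp_all add: limitin_pairwise o_def)
  then have "limitin T' c (fst p) H" "limitin T' d (snd p) H"
    by (simp_all add: limitin_coarser[OF coarser same_space])
  moreover have "limitin T' (\<lambda>g. g) x H" using H(2) lim by (rule limitin_mono_filter)
  moreover have "eventually (\<lambda>g. c g \<in> carrier G \<and> a g \<in> carrier G \<and> d g \<in> carrier G \<and>
                                  g = c g \<otimes>\<^bsub>G\<^esub> a g \<otimes>\<^bsub>G\<^esub> d g) H"
    using decH by (rule eventually_mono) (use CG AG in blast)
  ultimately have "limitin T' a (inv\<^bsub>G\<^esub> fst p \<otimes>\<^bsub>G\<^esub> x \<otimes>\<^bsub>G\<^esub> inv\<^bsub>G\<^esub> snd p) H"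
    by (rule middle_factor_limit[OF tg'])
  then have "limitin T' (\<lambda>b. b) (inv\<^bsub>G\<^esub> fst p \<otimes>\<^bsub>G\<^esub> x \<otimes>\<^bsub>G\<^esub> inv\<^bsub>G\<^esub> snd p) (filtermap a H)"
    unfolding limitin_def eventually_filtermap .
  moreover have "tends_to_infinity T H"
    using escapes H(2) unfolding tends_to_infinity_def by (blast intro: filter_leD)
  moreover have "eventually (\<lambda>g. c g \<in> C \<and> d g \<in> C \<and> g = c g \<otimes>\<^bsub>G\<^esub> a g \<otimes>\<^bsub>G\<^esub> d g) H"
    using decH by (rule eventually_mono) blast
  then have "tends_to_infinity T H \<Longrightarrow> tends_to_infinity T (filtermap a H)"
    by (intro tends_to_infinity_middle_factor[OF tg C])
  moreover have "net_in A (filtermap a H)"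
    unfolding net_in_def eventually_filtermap filtermap_bot_iff
    using decH by (intro conjI H(1)) (auto elim: eventually_mono)
  ultimately show thesis by (intro that) blast+
qed

(* Otherwise the previous lemma gives an escaping net in A
   converging in T'; quasi-semi-simplicity provides a subnet with non-precompact contraction
   group, whereas convergence in T' forces this contraction group to be trivial. *)
lemma qss_convergent_nets_do_not_escape:
  assumes qss: "quasi_semi_simple G T" and tg': "topological_group G T'"
    and Haus': "Hausdorff_space T'" and coarser: "\<forall>U. openin T' U \<longrightarrow> openin T U"
    and F: "F \<noteq> bot" "eventually (\<lambda>g. g \<in> carrier G) F" and lim: "limitin T' (\<lambda>g. g) x F"
  shows "\<not> tends_to_infinity T F"
proof
  assume escapes: "tends_to_infinity T F"
  obtain A C where tg: "topological_group G T" and Haus: "Hausdorff_space T"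
    and A: "subgroup A G" and C: "compactin T C"
    and dec: "carrier G = {c \<otimes>\<^bsub>G\<^esub> a \<otimes>\<^bsub>G\<^esub> c' | c a c'. c \<in> C \<and> a \<in> A \<and> c' \<in> C}"
    and contracting: "\<And>F. net_in A F \<Longrightarrow> tends_to_infinity T F \<Longrightarrow>
                            \<exists>F'. subnet F' F \<and> \<not> precompact T (U_plus G T F')"
    using quasi_semi_simpleD[OF qss] by blast
  have same_space: "topspace T' = topspace T" and carrier: "topspace T = carrier G"
    using tg tg' unfolding topological_group_def by simp_all
  obtain c a d where cad: "\<And>g. g \<in> carrier G \<Longrightarrow>
      c g \<in> C \<and> a g \<in> A \<and> d g \<in> C \<and> g = c g \<otimes>\<^bsub>G\<^esub> a g \<otimes>\<^bsub>G\<^esub> d g"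
    using decomposition_functions[OF dec] by blast
  obtain H h where "net_in A (filtermap a H)" "tends_to_infinity T (filtermap a H)"
    and lim_a: "limitin T' (\<lambda>b. b) h (filtermap a H)"
    using middle_factors_convergent_escaping_subnet[OF tg tg' coarser C subgroup.subset[OF A]
            cad F lim escapes] by blast
  then obtain F' where F': "subnet F' (filtermap a H)" and big: "\<not> precompact T (U_plus G T F')"
    using contracting by blast
  have "limitin T' (\<lambda>b. b) h F'"
    using F' lim_a unfolding subnet_def by (blast intro: limitin_mono_filter)
  then have "U_plus G T' F' \<subseteq> {\<one>\<^bsub>G\<^esub>}"
    using F' unfolding subnet_def by (intro U_plus_of_convergent_net[OF tg' Haus']) simp_all
  then have "U_plus G T F' \<subseteq> {\<one>\<^bsub>G\<^esub>}"
    using U_plus_coarser[OF coarser same_space] by blast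
  moreover have "\<one>\<^bsub>G\<^esub> \<in> topspace T"
    using tg carrier unfolding topological_group_def by (simp add: group.is_monoid monoid.one_closed)
  ultimately have "precompact T (U_plus G T F')"
    using Haus by (intro precompact_subset_singleton)
  with big show False by contradiction
qed

theorem theorem5p3:
  fixes G :: "('a, 'b) monoid_scheme" and \<tau> \<tau>' :: "'a topology"
  assumes "quasi_semi_simple G \<tau>"
    and "topological_group G \<tau>'"
    and "Hausdorff_space \<tau>'"
    and "\<forall>U. openin \<tau>' U \<longrightarrow> openin \<tau> U"
  shows "\<tau>' = \<tau>"
proof (rule coarser_topology_eq_if_no_escaping_nets)
  obtain A C where "topological_group G \<tau>"
    using assms(1) by (rule quasi_semi_simpleD)
  then show same_space: "topspace \<tau>' = topspace \<tau>"
    using assms(2) unfolding topological_group_def by simp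
  fix F x
  assume "F \<noteq> bot" "eventually (\<lambda>y. y \<in> topspace \<tau>) F" "limitin \<tau>' (\<lambda>y. y) x F"
  then show "\<not> tends_to_infinity \<tau> F"
    using assms same_space unfolding topological_group_def[of G \<tau>']
    by (intro qss_convergent_nets_do_not_escape[OF assms(1,2,3,4)]) auto
qed (use assms in auto)

end
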